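(* Let $a:\mathbb{C}\to\mathbb{C}$ be an entire holomorphic function with $a(w)\neq 0$ for every $w\in\mathbb{C}$. Let $c=\alpha+i\beta\in\mathbb{C}\setminus\{0,1,-1\}$ with $\alpha^2+\beta^2\neq 1$, put $b(w)=c/a(w)$, and let $X_0\in\mathbb{R}^4$. Define, for $w=u+iv\in\mathbb{C}$, $$f(w)=X_0+2\,\mathrm{Re}\int_0^w\Big(a(\xi)+\frac{c}{a(\xi)},\;1+c,\;i(1-c),\;a(\xi)-\frac{c}{a(\xi)}\Big)\,d\xi .$$ Then $f$ is a conformal (isothermic) minimal spacelike immersion of $\mathbb{C}$ into $\mathbb{R}^4_1$ (with $f_w=W(a,b)$, i.e. $\mu\equiv 1$). The coordinates $x=f^1-X_0^1=2[(1+\alpha)u-\beta v]$, $y=f^2-X_0^2=2[\beta u+(\alpha-1)v]$ define a linear bijection $(u,v)\mapsto(x,y)$ of $\mathbb{R}^2$ (equivalently $x_w=1+c$, $y_w=i(1-c)$), so that $f(\mathbb{C})$ is an entire graph of first type, i.e. $f(\mathbb{C})=\{(A(x,y),\,x+X_0^1,\,y+X_0^2,\,B(x,y)):(x,y)\in\mathbb{R}^2\}$ for smooth real functions $A,B$ on $\mathbb{R}^2$. Moreover, if $a$ is not constant, then there is a point of the surface at which the Gauss curvature is nonzero, and $f(\mathbb{C})$ is not contained in any affine hyperplane of $\mathbb{R}^4_1$.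
   Context: $\mathbb{R}^4_1$ is $\mathbb{R}^4$ with the Lorentzian product $\langle (a_0,a_1,a_2,a_3),(b_0,b_1,b_2,b_3)\rangle=-a_0b_0+a_1b_1+a_2b_2+a_3b_3$, extended complex-bilinearly to $\mathbb{C}^4$. A surface is spacelike if its induced metric is positive definite. For a map $f$ of a domain of $\mathbb{C}$ with parameter $w=u+iv$, $f_w=\tfrac12(f_u-if_v)$; $f$ is conformal (isothermic) if $\langle f_w,f_w\rangle=0$ and $\langle f_w,\overline{f_w}\rangle=\lambda^2/2>0$, in which case the induced metric is $\lambda^2|dw|^2$ and the Gauss curvature is $K=-\lambda^{-2}\Delta\ln\lambda$ with $\Delta=\partial_u^2+\partial_v^2$. For complex functions $a,b$ put $W(a,b)=(a+b,\,1+ab,\,i(1-ab),\,a-b)$. A surface is minimal if its mean curvature vector vanishes, equivalently each coordinate function is harmonic for the induced metric. A graph of first type is a surface $\{(A(x,y),x,y,B(x,y))\}$. *)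

theory Defs
  imports "HOL-Complex_Analysis.Complex_Analysis"
begin

text \<open>Vectors of R^4 / C^4 are of type real^4 / complex^4; the paper's coordinates
  0,1,2,3 correspond to the Isabelle indices 1,2,3,4.\<close>

definition lorentz :: "'a::comm_ring ^ 4 \<Rightarrow> 'a ^ 4 \<Rightarrow> 'a" where
  "lorentz x y = - (x$1 * y$1) + x$2 * y$2 + x$3 * y$3 + x$4 * y$4"

definition cnjv :: "complex ^ 4 \<Rightarrow> complex ^ 4" where
  "cnjv x = (\<chi> k. cnj (x$k))"

definition Wv :: "complex \<Rightarrow> complex \<Rightarrow> complex ^ 4" where
  "Wv a b = vector [a + b, 1 + a * b, \<i> * (1 - a * b), a - b]"

definition pu :: "(complex \<Rightarrow> real) \<Rightarrow> complex \<Rightarrow> real" where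
  "pu g w = deriv (\<lambda>t::real. g (w + of_real t)) 0"

definition pv :: "(complex \<Rightarrow> real) \<Rightarrow> complex \<Rightarrow> real" where
  "pv g w = deriv (\<lambda>t::real. g (w + \<i> * of_real t)) 0"

fun ipd :: "bool list \<Rightarrow> (complex \<Rightarrow> real) \<Rightarrow> complex \<Rightarrow> real" where
  "ipd [] g = g"
| "ipd (d # ds) g = (if d then pu else pv) (ipd ds g)"

definition smooth_fun :: "(complex \<Rightarrow> real) \<Rightarrow> bool" where
  "smooth_fun g \<longleftrightarrow> (\<forall>ds w. ipd ds g differentiable (at w))"

definition smooth_map :: "(complex \<Rightarrow> real ^ 4) \<Rightarrow> bool" where
  "smooth_map f \<longleftrightarrow> (\<forall>k. smooth_fun (\<lambda>z. f z $ k))"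

definition fu :: "(complex \<Rightarrow> real ^ 4) \<Rightarrow> complex \<Rightarrow> real ^ 4" where
  "fu f w = (\<chi> k. pu (\<lambda>z. f z $ k) w)"

definition fv :: "(complex \<Rightarrow> real ^ 4) \<Rightarrow> complex \<Rightarrow> real ^ 4" where
  "fv f w = (\<chi> k. pv (\<lambda>z. f z $ k) w)"

definition fw :: "(complex \<Rightarrow> real ^ 4) \<Rightarrow> complex \<Rightarrow> complex ^ 4" where
  "fw f w = (\<chi> k. (complex_of_real (fu f w $ k) - \<i> * complex_of_real (fv f w $ k)) / 2)"

definition gE :: "(complex \<Rightarrow> real ^ 4) \<Rightarrow> complex \<Rightarrow> real" where
  "gE f w = lorentz (fu f w) (fu f w)"
definition gF :: "(complex \<Rightarrow> real ^ 4) \<Rightarrow> complex \<Rightarrow> real" where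
  "gF f w = lorentz (fu f w) (fv f w)"
definition gG :: "(complex \<Rightarrow> real ^ 4) \<Rightarrow> complex \<Rightarrow> real" where
  "gG f w = lorentz (fv f w) (fv f w)"
definition gD :: "(complex \<Rightarrow> real ^ 4) \<Rightarrow> complex \<Rightarrow> real" where
  "gD f w = gE f w * gG f w - (gF f w)^2"

definition spacelike_immersion :: "(complex \<Rightarrow> real ^ 4) \<Rightarrow> bool" where
  "spacelike_immersion f \<longleftrightarrow> smooth_map f \<and> (\<forall>w. gE f w > 0 \<and> gD f w > 0)"

definition conformal :: "(complex \<Rightarrow> real ^ 4) \<Rightarrow> bool" where
  "conformal f \<longleftrightarrow> (\<forall>w. lorentz (fw f w) (fw f w) = 0 \<and>
      (\<exists>l::real. l > 0 \<and> lorentz (fw f w) (cnjv (fw f w)) = complex_of_real (l^2 / 2)))"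

definition laplace_beltrami :: "(complex \<Rightarrow> real ^ 4) \<Rightarrow> (complex \<Rightarrow> real) \<Rightarrow> complex \<Rightarrow> real" where
  "laplace_beltrami f h w =
     (pu (\<lambda>z. sqrt (gD f z) * (gG f z * pu h z - gF f z * pv h z) / gD f z) w
    + pv (\<lambda>z. sqrt (gD f z) * (gE f z * pv h z - gF f z * pu h z) / gD f z) w) / sqrt (gD f w)"

definition minimal :: "(complex \<Rightarrow> real ^ 4) \<Rightarrow> bool" where
  "minimal f \<longleftrightarrow> (\<forall>k w. laplace_beltrami f (\<lambda>z. f z $ k) w = 0)"

definition conf_factor :: "(complex \<Rightarrow> real ^ 4) \<Rightarrow> complex \<Rightarrow> real" where
  "conf_factor f w = sqrt (2 * Re (lorentz (fw f w) (cnjv (fw f w))))"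

definition gauss_curv :: "(complex \<Rightarrow> real ^ 4) \<Rightarrow> complex \<Rightarrow> real" where
  "gauss_curv f w = - (pu (pu (\<lambda>z. ln (conf_factor f z))) w
                      + pv (pv (\<lambda>z. ln (conf_factor f z))) w) / (conf_factor f w)^2"

end

theory Submission
  imports Defs
begin

text \<open>The integrand Phi = W(a, c/a) is a holomorphic null vector, <Phi, Phi> = 0, with
  <Phi, cnj Phi> >= 2 (1 - |c|)^2 > 0. Hence f = X0 + 2 Re (integral of Phi) satisfies f_w = Phi
  and is a conformal spacelike immersion; it is minimal because for a conformal metric the
  Laplace-Beltrami operator is a multiple of the flat Laplacian, and real parts of holomorphic
  functions are harmonic. The coordinates x, y are real-linear in w with determinant
  4 (|c|^2 - 1), which gives the graph. A hyperplane n . f = d would force the components of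
  Phi to satisfy a linear relation, i.e. a quadratic equation for the non-constant function a.
  Finally, writing a = exp g, the density <Phi, cnj Phi> depends only on s = Im g, so
  K = - L''(Im g) |g'|^2 / lambda^2 with L(s) = ln lambda; the zeros of L'' form a level set of a
  function whose composition with Im g is not locally constant where g' is nonzero.\<close>

section \<open>Directional derivatives in the plane\<close>

lemma holomorphic_on_UNIV_has_field_derivative:
  "H holomorphic_on UNIV \<Longrightarrow> (H has_field_derivative deriv H w) (at w)"
  by (meson DERIV_deriv_iff_field_differentiable UNIV_I holomorphic_on_imp_differentiable_at open_UNIV)

definition has_dir_deriv :: "(complex \<Rightarrow> real) \<Rightarrow> complex \<Rightarrow> complex \<Rightarrow> real \<Rightarrow> bool" where
  "has_dir_deriv g p w d \<longleftrightarrow> ((\<lambda>t::real. g (w + p * of_real t)) has_real_derivative d) (at 0)"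

lemma has_dir_deriv_imp_pu: "has_dir_deriv g 1 w d \<Longrightarrow> pu g w = d"
  unfolding has_dir_deriv_def pu_def by (simp add: DERIV_imp_deriv)

lemma has_dir_deriv_imp_pv: "has_dir_deriv g \<i> w d \<Longrightarrow> pv g w = d"
  unfolding has_dir_deriv_def pv_def by (rule DERIV_imp_deriv)

lemma has_dir_deriv_chain:
  "has_dir_deriv g p w d \<Longrightarrow> (\<phi> has_real_derivative \<phi>') (at (g w))
    \<Longrightarrow> has_dir_deriv (\<lambda>z. \<phi> (g z)) p w (\<phi>' * d)"
  unfolding has_dir_deriv_def by (rule DERIV_chain2) simp_all

lemma has_dir_deriv_mult:
  "has_dir_deriv g1 p w d1 \<Longrightarrow> has_dir_deriv g2 p w d2
    \<Longrightarrow> has_dir_deriv (\<lambda>z. g1 z * g2 z) p w (d1 * g2 w + g1 w * d2)"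
  unfolding has_dir_deriv_def by (drule (1) DERIV_mult) (simp add: mult.commute)

lemma has_dir_deriv_Re_Im_holomorphic:
  assumes "H holomorphic_on UNIV"
  shows "has_dir_deriv (\<lambda>z. Re (H z)) p w (Re (p * deriv H w))"
    and "has_dir_deriv (\<lambda>z. Im (H z)) p w (Im (p * deriv H w))"
proof -
  have "((\<lambda>t::real. w + p * of_real t) has_vector_derivative p) (at 0)"
    by (auto intro!: derivative_eq_intros)
  from field_vector_diff_chain_at[OF this holomorphic_on_UNIV_has_field_derivative[OF assms]]
  have "((\<lambda>t::real. H (w + p * of_real t)) has_vector_derivative p * deriv H w) (at 0)"
    by (simp add: o_def mult.commute)
  then show "has_dir_deriv (\<lambda>z. Re (H z)) p w (Re (p * deriv H w))"
    and "has_dir_deriv (\<lambda>z. Im (H z)) p w (Im (p * deriv H w))"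
    unfolding has_dir_deriv_def has_vector_derivative_complex_iff by simp_all
qed

lemma pu_Re_holomorphic: "H holomorphic_on UNIV \<Longrightarrow> pu (\<lambda>z. Re (H z)) w = Re (deriv H w)"
  using has_dir_deriv_imp_pu has_dir_deriv_Re_Im_holomorphic(1) by fastforce

lemma pv_Re_holomorphic: "H holomorphic_on UNIV \<Longrightarrow> pv (\<lambda>z. Re (H z)) w = - Im (deriv H w)"
  using has_dir_deriv_imp_pv has_dir_deriv_Re_Im_holomorphic(1) by fastforce

lemma harmonic_Re_holomorphic:
  assumes "H holomorphic_on UNIV"
  shows "pu (pu (\<lambda>z. Re (H z))) w + pv (pv (\<lambda>z. Re (H z))) w = 0"
proof -
  have H': "deriv H holomorphic_on UNIV" and iH': "(\<lambda>z. \<i> * deriv H z) holomorphic_on UNIV"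
    using assms by (auto intro!: holomorphic_intros holomorphic_deriv)
  have "pv (\<lambda>z. Re (H z)) = (\<lambda>z. Re (\<i> * deriv H z))"
    using pv_Re_holomorphic[OF assms] by auto
  moreover have "pu (\<lambda>z. Re (H z)) = (\<lambda>z. Re (deriv H z))"
    using pu_Re_holomorphic[OF assms] by auto
  moreover have "deriv (\<lambda>z. \<i> * deriv H z) w = \<i> * deriv (deriv H) w"
    using H' by (simp add: holomorphic_on_imp_differentiable_at)
  ultimately show ?thesis
    using pu_Re_holomorphic[OF H'] pv_Re_holomorphic[OF iH'] by simp
qed

text \<open>The first-order terms cancel because \<open>Im g\<close> is harmonic.\<close>
lemma laplacian_comp_Im_holomorphic:
  assumes g: "g holomorphic_on UNIV"
    and L: "\<And>s. (L has_real_derivative L1 s) (at s)"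
    and L1: "\<And>s. (L1 has_real_derivative L2 s) (at s)"
  shows "pu (pu (\<lambda>z. L (Im (g z)))) w + pv (pv (\<lambda>z. L (Im (g z)))) w
       = L2 (Im (g w)) * (cmod (deriv g w))\<^sup>2"
proof -
  have g': "deriv g holomorphic_on UNIV" using g by (rule holomorphic_deriv) simp
  note dIm = has_dir_deriv_Re_Im_holomorphic(2)
  have u: "pu (\<lambda>z. L (Im (g z))) = (\<lambda>z. L1 (Im (g z)) * Im (deriv g z))"
    using has_dir_deriv_imp_pu[OF has_dir_deriv_chain[OF dIm[OF g] L]] by fastforce
  have v: "pv (\<lambda>z. L (Im (g z))) = (\<lambda>z. L1 (Im (g z)) * Re (deriv g z))"
    using has_dir_deriv_imp_pv[OF has_dir_deriv_chain[OF dIm[OF g] L]] by fastforce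
  have uu: "pu (\<lambda>z. L1 (Im (g z)) * Im (deriv g z)) w
      = L2 (Im (g w)) * Im (deriv g w) * Im (deriv g w) + L1 (Im (g w)) * Im (deriv (deriv g) w)"
    using has_dir_deriv_imp_pu[OF has_dir_deriv_mult[OF has_dir_deriv_chain[OF dIm[OF g] L1] dIm[OF g']]]
    by simp
  have vv: "pv (\<lambda>z. L1 (Im (g z)) * Re (deriv g z)) w
      = L2 (Im (g w)) * Re (deriv g w) * Re (deriv g w) - L1 (Im (g w)) * Im (deriv (deriv g) w)"
    using has_dir_deriv_imp_pv[OF has_dir_deriv_mult[OF has_dir_deriv_chain[OF dIm[OF g] L1]
          has_dir_deriv_Re_Im_holomorphic(1)[OF g']]]
    by simp
  show ?thesis
    unfolding u v uu vv cmod_power2 by (simp add: algebra_simps power2_eq_square)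
qed

lemma dir_deriv_nonzero_imp_nonconstant_near:
  assumes "has_dir_deriv g p w d" "d \<noteq> 0" "e > 0"
  obtains z where "dist w z < e" "g z \<noteq> g w"
proof -
  define r where "r = e / (cmod p + 1)"
  have p1: "cmod p + 1 > 0" using norm_ge_zero[of p] by linarith
  then have r: "r > 0" using assms(3) unfolding r_def by simp
  obtain t where t: "\<bar>t\<bar> < r" "g (w + p * of_real t) \<noteq> g w"
    using DERIV_local_const[OF assms(1)[unfolded has_dir_deriv_def] r] assms(2) by force
  have "cmod p * \<bar>t\<bar> \<le> cmod p * r" using t(1) by (simp add: mult_left_mono)
  also have "\<dots> < e" using assms(3) p1 unfolding r_def by (simp add: field_simps)
  finally have "dist w (w + p * of_real t) < e" by (simp add: dist_norm norm_mult)
  with t(2) that show thesis by blast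
qed

section \<open>Smoothness of real parts of holomorphic functions\<close>

definition lin_ReIm :: "complex \<Rightarrow> complex \<Rightarrow> complex \<Rightarrow> complex" where
  "lin_ReIm P Q z = P * of_real (Re z) + Q * of_real (Im z)"

lemma lin_ReIm_add_line:
  "lin_ReIm P Q (w + r * of_real t) = lin_ReIm P Q w + lin_ReIm P Q r * of_real t"
  by (simp add: lin_ReIm_def algebra_simps)

lemma lin_ReIm_1_i: "lin_ReIm 1 \<i> z = z"
  by (simp add: lin_ReIm_def complex_eq_iff)

lemma has_dir_deriv_Re_comp_lin_ReIm:
  assumes "H holomorphic_on UNIV"
  shows "has_dir_deriv (\<lambda>z. Re (H (lin_ReIm P Q z))) r w
           (Re (lin_ReIm P Q r * deriv H (lin_ReIm P Q w)))"
  using has_dir_deriv_Re_Im_holomorphic(1)[OF assms, of "lin_ReIm P Q r" "lin_ReIm P Q w"]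
  unfolding has_dir_deriv_def lin_ReIm_add_line .

lemma ipd_Re_comp_lin_ReIm:
  assumes "G holomorphic_on UNIV"
  shows "\<exists>H. H holomorphic_on UNIV
           \<and> ipd ds (\<lambda>z. Re (G (lin_ReIm P Q z))) = (\<lambda>z. Re (H (lin_ReIm P Q z)))"
proof (induction ds)
  case Nil
  then show ?case using assms by auto
next
  case (Cons d ds)
  then obtain H where H: "H holomorphic_on UNIV"
    and ipd_H: "ipd ds (\<lambda>z. Re (G (lin_ReIm P Q z))) = (\<lambda>z. Re (H (lin_ReIm P Q z)))"
    by blast
  have H': "(\<lambda>z. p * deriv H z) holomorphic_on UNIV" for p
    using H by (auto intro!: holomorphic_intros holomorphic_deriv)
  have pu_H: "pu (\<lambda>z. Re (H (lin_ReIm P Q z))) = (\<lambda>z. Re (P * deriv H (lin_ReIm P Q z)))"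
    using has_dir_deriv_imp_pu[OF has_dir_deriv_Re_comp_lin_ReIm[OF H]]
    by (auto simp: lin_ReIm_def)
  have pv_H: "pv (\<lambda>z. Re (H (lin_ReIm P Q z))) = (\<lambda>z. Re (Q * deriv H (lin_ReIm P Q z)))"
    using has_dir_deriv_imp_pv[OF has_dir_deriv_Re_comp_lin_ReIm[OF H]]
    by (auto simp: lin_ReIm_def)
  show ?case
  proof (cases d)
    case True
    then show ?thesis
      using H' by (intro exI[of _ "\<lambda>z. P * deriv H z"]) (simp add: ipd_H pu_H)
  next
    case False
    then show ?thesis
      using H' by (intro exI[of _ "\<lambda>z. Q * deriv H z"]) (simp add: ipd_H pv_H)
  qed
qed

lemma differentiable_Re_comp_lin_ReIm:
  assumes "H holomorphic_on UNIV"
  shows "(\<lambda>z. Re (H (lin_ReIm P Q z))) differentiable (at w)"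
proof -
  have "(lin_ReIm P Q has_derivative lin_ReIm P Q) (at w)"
    unfolding lin_ReIm_def by (auto intro!: derivative_eq_intros)
  moreover have "(H has_derivative (\<lambda>h. deriv H (lin_ReIm P Q w) * h)) (at (lin_ReIm P Q w))"
    using holomorphic_on_UNIV_has_field_derivative[OF assms] by (simp add: has_field_derivative_def)
  ultimately have "((\<lambda>z. H (lin_ReIm P Q z)) has_derivative
                    (\<lambda>h. deriv H (lin_ReIm P Q w) * lin_ReIm P Q h)) (at w)"
    by (rule has_derivative_compose[where g = H, unfolded o_def])
  then have "((\<lambda>z. Re (H (lin_ReIm P Q z))) has_derivative
               (\<lambda>h. Re (deriv H (lin_ReIm P Q w) * lin_ReIm P Q h))) (at w)"
    by (rule has_derivative_Re)
  then show ?thesis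
    unfolding differentiable_def by blast
qed

lemma smooth_fun_Re_comp_lin_ReIm:
  "G holomorphic_on UNIV \<Longrightarrow> smooth_fun (\<lambda>z. Re (G (lin_ReIm P Q z)))"
  unfolding smooth_fun_def using ipd_Re_comp_lin_ReIm differentiable_Re_comp_lin_ReIm by metis

lemma smooth_fun_Re_holomorphic: "G holomorphic_on UNIV \<Longrightarrow> smooth_fun (\<lambda>z. Re (G z))"
  using smooth_fun_Re_comp_lin_ReIm[of G 1 \<i>] by (simp add: lin_ReIm_1_i)

section \<open>Lorentzian algebra and conformal metrics\<close>

lemma vector4_nth [simp]:
  "(vector [x1, x2, x3, x4] :: 'a::zero ^ 4) $ 1 = x1"
  "(vector [x1, x2, x3, x4] :: 'a::zero ^ 4) $ 2 = x2"
  "(vector [x1, x2, x3, x4] :: 'a::zero ^ 4) $ 3 = x3"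
  "(vector [x1, x2, x3, x4] :: 'a::zero ^ 4) $ 4 = x4"
  unfolding vector_def by simp_all

lemma lorentz_cnjv_real: "lorentz W (cnjv W) = of_real (Re (lorentz W (cnjv W)))"
  unfolding lorentz_def cnjv_def by (simp add: complex_eq_iff algebra_simps)

lemma lorentz_Re_Im_of_null:
  fixes W :: "complex ^ 4"
  assumes "lorentz W W = 0"
  defines "U \<equiv> \<chi> k. 2 * Re (W $ k)" and "V \<equiv> \<chi> k. - (2 * Im (W $ k))"
  shows "lorentz U U = 2 * Re (lorentz W (cnjv W))"
    and "lorentz V V = 2 * Re (lorentz W (cnjv W))"
    and "lorentz U V = 0"
proof -
  from assms(1) have Re0: "Re (lorentz W W) = 0" and Im0: "Im (lorentz W W) = 0" by simp_all
  show "lorentz U U = 2 * Re (lorentz W (cnjv W))" "lorentz V V = 2 * Re (lorentz W (cnjv W))"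
    using Re0 unfolding U_def V_def lorentz_def cnjv_def
    by (simp_all add: algebra_simps power2_eq_square)
  show "lorentz U V = 0"
    using Im0 unfolding U_def V_def lorentz_def by (simp add: algebra_simps)
qed

lemma lorentz_Wv_Wv: "lorentz (Wv A B) (Wv A B) = 0"
  unfolding lorentz_def Wv_def by (simp add: algebra_simps power2_eq_square)

lemma lorentz_Wv_cnjv:
  "lorentz (Wv A B) (cnjv (Wv A B)) = of_real (2 + 2 * (cmod (A * B))\<^sup>2 - 4 * Re (A * cnj B))"
proof -
  have "(cmod (A * B))\<^sup>2 = ((Re A)\<^sup>2 + (Im A)\<^sup>2) * ((Re B)\<^sup>2 + (Im B)\<^sup>2)"
    by (simp add: norm_mult power_mult_distrib cmod_power2)
  then show ?thesis
    unfolding lorentz_def Wv_def cnjv_def by (simp add: complex_eq_iff algebra_simps power2_eq_square)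
qed

lemma Re_lorentz_Wv_cnjv_pos:
  assumes "cmod (A * B) \<noteq> 1"
  shows "Re (lorentz (Wv A B) (cnjv (Wv A B))) > 0"
proof -
  have "Re (A * cnj B) \<le> cmod (A * B)"
    using complex_Re_le_cmod[of "A * cnj B"] by (simp add: norm_mult)
  then have "Re (lorentz (Wv A B) (cnjv (Wv A B))) \<ge> 2 * (1 - cmod (A * B))\<^sup>2"
    unfolding lorentz_Wv_cnjv by (simp add: power2_eq_square algebra_simps)
  moreover have "(1 - cmod (A * B))\<^sup>2 > 0" using assms by simp
  ultimately show ?thesis by linarith
qed

lemma laplace_beltrami_conformal_metric:
  assumes "\<And>z. gF f z = 0" "\<And>z. gG f z = gE f z" "\<And>z. gE f z > 0"
  shows "laplace_beltrami f h w = (pu (pu h) w + pv (pv h) w) / gE f w"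
proof -
  have sqrt_gD: "sqrt (gD f z) = gE f z" for z
    unfolding gD_def assms(1,2) using assms(3)[of z] by (simp add: power2_eq_square)
  have gE_ne: "gE f z \<noteq> 0" and gE_abs: "\<bar>gE f z\<bar> = gE f z" for z
    using assms(3)[of z] by auto
  have "(\<lambda>z. sqrt (gD f z) * (gG f z * pu h z - gF f z * pv h z) / gD f z) = pu h"
    and "(\<lambda>z. sqrt (gD f z) * (gE f z * pv h z - gF f z * pu h z) / gD f z) = pv h"
    by (simp_all add: fun_eq_iff gD_def assms(1,2) power2_eq_square gE_ne gE_abs)
  then show ?thesis
    unfolding laplace_beltrami_def sqrt_gD by simp
qed

section \<open>Surfaces given by a holomorphic Weierstrass integrand\<close>

lemma has_field_derivative_linepath_integral:
  assumes "h holomorphic_on UNIV"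
  shows "((\<lambda>z. contour_integral (linepath 0 z) h) has_field_derivative h w) (at w)"
proof -
  obtain P where P: "\<And>x. (P has_field_derivative h x) (at x)"
    using holomorphic_convex_primitive'[of UNIV h] assms by auto
  have "contour_integral (linepath 0 z) h = P z - P 0" for z
  proof -
    have "(h has_contour_integral (P (pathfinish (linepath 0 z)) - P (pathstart (linepath 0 z))))
            (linepath 0 z)"
      using P by (intro contour_integral_primitive[of UNIV]) (auto simp del: linepath_0)
    then show ?thesis using contour_integral_unique by fastforce
  qed
  then show ?thesis
    using P[of w] by (auto intro!: derivative_eq_intros)
qed

locale weierstrass_rep =
  fixes \<Phi> :: "complex \<Rightarrow> complex ^ 4" and X0 :: "real ^ 4" and f :: "complex \<Rightarrow> real ^ 4"
  assumes holomorphic_\<Phi>: "(\<lambda>\<xi>. \<Phi> \<xi> $ k) holomorphic_on UNIV"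
    and f_eq: "f w = X0 + 2 *\<^sub>R (\<chi> k. Re (contour_integral (linepath 0 w) (\<lambda>\<xi>. \<Phi> \<xi> $ k)))"
begin

definition potential :: "4 \<Rightarrow> complex \<Rightarrow> complex" where
  "potential k z = of_real (X0 $ k) + 2 * contour_integral (linepath 0 z) (\<lambda>\<xi>. \<Phi> \<xi> $ k)"

lemma potential_has_field_derivative: "(potential k has_field_derivative 2 * \<Phi> z $ k) (at z)"
  unfolding potential_def[abs_def]
  using has_field_derivative_linepath_integral[OF holomorphic_\<Phi>]
  by (auto intro!: derivative_eq_intros)

lemma holomorphic_potential: "potential k holomorphic_on UNIV"
  using potential_has_field_derivative holomorphic_on_def field_differentiable_def
    field_differentiable_at_within by blast

lemma deriv_potential: "deriv (potential k) z = 2 * \<Phi> z $ k"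
  using potential_has_field_derivative by (rule DERIV_imp_deriv)

lemma f_nth: "f z $ k = Re (potential k z)"
  unfolding f_eq potential_def by simp

lemma fu_eq: "fu f w = (\<chi> k. 2 * Re (\<Phi> w $ k))"
  unfolding fu_def f_nth pu_Re_holomorphic[OF holomorphic_potential] deriv_potential by simp

lemma fv_eq: "fv f w = (\<chi> k. - (2 * Im (\<Phi> w $ k)))"
  unfolding fv_def f_nth pv_Re_holomorphic[OF holomorphic_potential] deriv_potential by simp

lemma fw_eq: "fw f w = \<Phi> w"
  unfolding fw_def fu_eq fv_eq by (simp add: vec_eq_iff complex_eq_iff)

lemma smooth_map_f: "smooth_map f"
  unfolding smooth_map_def f_nth using smooth_fun_Re_holomorphic holomorphic_potential by blast

lemma conf_factor_eq: "conf_factor f w = sqrt (2 * Re (lorentz (\<Phi> w) (cnjv (\<Phi> w))))"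
  unfolding conf_factor_def fw_eq ..

lemma hyperplane_imp_linear_relation:
  assumes "\<forall>w. n \<bullet> f w = d"
  shows "(\<Sum>k\<in>UNIV. of_real (n $ k) * \<Phi> w $ k) = 0"
proof -
  define H where "H z = (\<Sum>k\<in>UNIV. of_real (n $ k) * potential k z)" for z
  have H: "H holomorphic_on UNIV"
    unfolding H_def using holomorphic_potential by (auto intro!: holomorphic_intros)
  have "(H has_field_derivative (\<Sum>k\<in>UNIV. of_real (n $ k) * (2 * \<Phi> w $ k))) (at w)"
    unfolding H_def[abs_def] using potential_has_field_derivative
    by (auto intro!: derivative_eq_intros sum.cong simp: mult_ac)
  then have dH: "deriv H w = 2 * (\<Sum>k\<in>UNIV. of_real (n $ k) * \<Phi> w $ k)"
    by (simp add: DERIV_imp_deriv sum_distrib_left algebra_simps)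
  have "Re (H z) = d" for z
    using assms unfolding H_def by (simp add: Re_sum inner_vec_def f_nth)
  then have "(\<lambda>z. Re (H z)) = (\<lambda>z. d)" by simp
  then have "Re (deriv H w) = 0" "Im (deriv H w) = 0"
    using pu_Re_holomorphic[OF H, of w] pv_Re_holomorphic[OF H, of w]
    by (simp_all add: pu_def pv_def)
  then show ?thesis using dH by (simp add: complex_eq_iff)
qed

context
  assumes null: "\<And>w. lorentz (\<Phi> w) (\<Phi> w) = 0"
    and positive: "\<And>w. Re (lorentz (\<Phi> w) (cnjv (\<Phi> w))) > 0"
begin

lemma metric_eq:
  "gE f w = 2 * Re (lorentz (\<Phi> w) (cnjv (\<Phi> w)))"
  "gG f w = 2 * Re (lorentz (\<Phi> w) (cnjv (\<Phi> w)))"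
  "gF f w = 0"
  unfolding gE_def gG_def gF_def fu_eq fv_eq using lorentz_Re_Im_of_null[OF null] by simp_all

lemma conformal_f: "conformal f"
  unfolding conformal_def fw_eq
proof (intro allI conjI)
  fix w
  let ?\<rho> = "Re (lorentz (\<Phi> w) (cnjv (\<Phi> w)))"
  show "lorentz (\<Phi> w) (\<Phi> w) = 0" by (rule null)
  show "\<exists>l>0. lorentz (\<Phi> w) (cnjv (\<Phi> w)) = complex_of_real (l\<^sup>2 / 2)"
    using positive[of w] lorentz_cnjv_real[of "\<Phi> w"]
    by (intro exI[of _ "sqrt (2 * ?\<rho>)"]) simp
qed

lemma spacelike_immersion_f: "spacelike_immersion f"
  unfolding spacelike_immersion_def gD_def metric_eq
  using smooth_map_f positive by simp

lemma minimal_f: "minimal f"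
  unfolding minimal_def
proof (intro allI)
  fix k w
  have "laplace_beltrami f (\<lambda>z. f z $ k) w
      = (pu (pu (\<lambda>z. f z $ k)) w + pv (pv (\<lambda>z. f z $ k)) w) / gE f w"
    by (rule laplace_beltrami_conformal_metric) (simp_all add: metric_eq positive)
  then show "laplace_beltrami f (\<lambda>z. f z $ k) w = 0"
    unfolding f_nth harmonic_Re_holomorphic[OF holomorphic_potential] by simp
qed

end

end

section \<open>An entire graph of first type\<close>

lemma continuous_nonconstant_infinite_range:
  fixes g :: "'a::real_normed_vector \<Rightarrow> 'b::metric_space"
  assumes "continuous_on UNIV g" "\<nexists>k. \<forall>w. g w = k"
  shows "infinite (range g)"
proof
  assume "finite (range g)"
  moreover have "connected (range g)"
    by (intro connected_continuous_image assms(1) connected_UNIV)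
  ultimately have "range g = {} \<or> (\<exists>k. range g = {k})"
    using connected_finite_iff_sing by blast
  with assms(2) show False by auto
qed

lemma continuous_nonconstant_obtains_three_values:
  fixes g :: "'a::real_normed_vector \<Rightarrow> 'b::metric_space"
  assumes "continuous_on UNIV g" "\<nexists>k. \<forall>w. g w = k"
  obtains w1 w2 w3 where "g w1 \<noteq> g w2" "g w2 \<noteq> g w3" "g w1 \<noteq> g w3"
proof -
  obtain B where B: "finite B" "card B = 3" "B \<subseteq> range g"
    using infinite_arbitrarily_large[OF continuous_nonconstant_infinite_range[OF assms]] by blast
  then obtain x y z where "B = {x, y, z}" "x \<noteq> y" "y \<noteq> z" "x \<noteq> z"
    using card_3_iff by metis
  with B(3) that show thesis by auto
qed

lemma quadratic_three_roots_eq_0: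
  fixes e0 e1 e2 z1 z2 z3 :: "'a::idom"
  assumes "z1 \<noteq> z2" "z2 \<noteq> z3" "z1 \<noteq> z3"
    and "\<And>z. z \<in> {z1, z2, z3} \<Longrightarrow> e2 * z\<^sup>2 + e1 * z + e0 = 0"
  shows "e2 = 0 \<and> e1 = 0 \<and> e0 = 0"
proof -
  have root: "e2 * z\<^sup>2 + e1 * z + e0 = 0" if "z \<in> {z1, z2, z3}" for z
    using assms(4) that .
  have diff: "(z - z') * (e2 * (z + z') + e1) = 0" if "z \<in> {z1, z2, z3}" "z' \<in> {z1, z2, z3}" for z z'
  proof -
    have "(z - z') * (e2 * (z + z') + e1) = (e2 * z\<^sup>2 + e1 * z + e0) - (e2 * z'\<^sup>2 + e1 * z' + e0)"
      by (simp add: algebra_simps power2_eq_square)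
    then show ?thesis by (simp only: root[OF that(1)] root[OF that(2)]) simp
  qed
  have A: "e2 * (z1 + z2) + e1 = 0" and B: "e2 * (z1 + z3) + e1 = 0"
    using diff[of z1 z2] diff[of z1 z3] assms(1,3) by auto
  have "e2 * (z2 - z3) = (e2 * (z1 + z2) + e1) - (e2 * (z1 + z3) + e1)"
    by (simp add: algebra_simps)
  then have "e2 * (z2 - z3) = 0" using A B by simp
  then have "e2 = 0" using assms(2) by simp
  then show ?thesis using A root[of z1] by simp
qed

locale first_type_graph =
  fixes a :: "complex \<Rightarrow> complex" and c :: complex and X0 :: "real ^ 4"
    and f :: "complex \<Rightarrow> real ^ 4"
  assumes a_entire: "a holomorphic_on UNIV"
    and a_nz: "\<forall>w. a w \<noteq> 0"
    and c_ne: "c \<notin> {0, 1, -1}"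
    and c_abs: "(Re c)\<^sup>2 + (Im c)\<^sup>2 \<noteq> 1"
    and f_def: "\<forall>w. f w = X0 + 2 *\<^sub>R (\<chi> k. Re (contour_integral (linepath 0 w)
                 (\<lambda>\<xi>. (vector [a \<xi> + c / a \<xi>, 1 + c, \<i> * (1 - c), a \<xi> - c / a \<xi>] :: complex ^ 4) $ k)))"

lemma (in first_type_graph) Wv_eq:
  "Wv (a w) (c / a w) = vector [a w + c / a w, 1 + c, \<i> * (1 - c), a w - c / a w]"
  using a_nz unfolding Wv_def by simp

sublocale first_type_graph \<subseteq> W: weierstrass_rep "\<lambda>\<xi>. Wv (a \<xi>) (c / a \<xi>)" X0 f
proof
  fix k :: 4
  have "(\<lambda>\<xi>. c / a \<xi>) holomorphic_on UNIV"
    using a_entire a_nz by (auto intro!: holomorphic_intros)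
  then show "(\<lambda>\<xi>. Wv (a \<xi>) (c / a \<xi>) $ k) holomorphic_on UNIV"
    using exhaust_4[of k] a_entire unfolding Wv_eq by (auto intro!: holomorphic_intros)
qed (use f_def in \<open>simp add: Wv_eq\<close>)

context first_type_graph
begin

lemma cmod_c_ne_1: "cmod c \<noteq> 1"
  using c_abs by (metis cmod_power2 power_one)

lemma W_null: "lorentz (Wv (a w) (c / a w)) (Wv (a w) (c / a w)) = 0"
  by (rule lorentz_Wv_Wv)

lemma W_positive: "Re (lorentz (Wv (a w) (c / a w)) (cnjv (Wv (a w) (c / a w)))) > 0"
  using a_nz cmod_c_ne_1 by (intro Re_lorentz_Wv_cnjv_pos) simp

lemma f_coord_2: "f w $ 2 - X0 $ 2 = 2 * ((1 + Re c) * Re w - Im c * Im w)"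
  using f_def by (simp add: algebra_simps)

lemma f_coord_3: "f w $ 3 - X0 $ 3 = 2 * (Im c * Re w + (Re c - 1) * Im w)"
  using f_def by (simp add: algebra_simps)

text \<open>\<open>(Re c)\<^sup>2 + (Im c)\<^sup>2 - 1\<close> is a quarter of the Jacobian of \<open>(u, v) \<mapsto> (x, y)\<close>.\<close>
definition coord_det :: real where
  "coord_det = (Re c)\<^sup>2 + (Im c)\<^sup>2 - 1"

definition uv_of_xy :: "real \<Rightarrow> real \<Rightarrow> complex" where
  "uv_of_xy x y = Complex ((x * (Re c - 1) + Im c * y) / (2 * coord_det))
                          (((1 + Re c) * y - Im c * x) / (2 * coord_det))"

lemma coord_det_nz: "coord_det \<noteq> 0"
  using c_abs unfolding coord_det_def by simp

lemma coord_kernel_trivial: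
  assumes "y2 * (1 + Re c) + y3 * Im c = 0" "y2 * Im c + y3 * (1 - Re c) = 0"
  shows "y2 = 0 \<and> y3 = 0"
proof -
  have "y2 * coord_det = (Re c - 1) * (y2 * (1 + Re c) + y3 * Im c) + Im c * (y2 * Im c + y3 * (1 - Re c))"
   and "y3 * coord_det = Im c * (y2 * (1 + Re c) + y3 * Im c) - (1 + Re c) * (y2 * Im c + y3 * (1 - Re c))"
    unfolding coord_det_def by (simp_all add: algebra_simps power2_eq_square)
  then have "y2 * coord_det = 0" "y3 * coord_det = 0"
    unfolding assms by simp_all
  then show ?thesis using coord_det_nz by simp
qed

lemma uv_of_xy_f: "uv_of_xy (f w $ 2 - X0 $ 2) (f w $ 3 - X0 $ 3) = w"
  using coord_det_nz unfolding f_coord_2 f_coord_3 uv_of_xy_def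
  by (simp add: complex_eq_iff field_simps) (simp add: coord_det_def algebra_simps power2_eq_square)

lemma f_uv_of_xy:
  "f (uv_of_xy x y) $ 2 - X0 $ 2 = x" "f (uv_of_xy x y) $ 3 - X0 $ 3 = y"
  using coord_det_nz unfolding f_coord_2 f_coord_3 uv_of_xy_def
  by (simp_all add: field_simps) (simp_all add: coord_det_def algebra_simps power2_eq_square)

lemma bij_coords: "bij (\<lambda>w. (f w $ 2 - X0 $ 2, f w $ 3 - X0 $ 3))"
  by (rule o_bij[where g = "\<lambda>(x, y). uv_of_xy x y"]) (auto simp: uv_of_xy_f f_uv_of_xy)

lemma uv_of_xy_lin_ReIm:
  "uv_of_xy (Re z) (Im z) = lin_ReIm (Complex ((Re c - 1) / (2 * coord_det)) (- Im c / (2 * coord_det)))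
                                     (Complex (Im c / (2 * coord_det)) ((1 + Re c) / (2 * coord_det))) z"
  unfolding uv_of_xy_def lin_ReIm_def
  by (simp add: complex_eq_iff add_divide_distrib diff_divide_distrib algebra_simps)

lemma smooth_fun_f_uv_of_xy: "smooth_fun (\<lambda>z. f (uv_of_xy (Re z) (Im z)) $ k)"
  unfolding uv_of_xy_lin_ReIm W.f_nth by (rule smooth_fun_Re_comp_lin_ReIm[OF W.holomorphic_potential])

lemma range_f_graph:
  "range f = {(vector [f (uv_of_xy x y) $ 1, x + X0 $ 2, y + X0 $ 3, f (uv_of_xy x y) $ 4] :: real ^ 4)
             | x y. True}" (is "_ = ?G")
proof (intro set_eqI iffI)
  fix v assume "v \<in> range f"
  then obtain w where v: "v = f w" by auto
  show "v \<in> ?G"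
    unfolding v
    by (rule CollectI, rule exI[of _ "f w $ 2 - X0 $ 2"], rule exI[of _ "f w $ 3 - X0 $ 3"])
       (simp add: uv_of_xy_f vec_eq_iff forall_4)
next
  fix v assume "v \<in> ?G"
  then obtain x y where
    v: "v = vector [f (uv_of_xy x y) $ 1, x + X0 $ 2, y + X0 $ 3, f (uv_of_xy x y) $ 4]"
    by auto
  have "v = f (uv_of_xy x y)"
    unfolding v using f_uv_of_xy[of x y] by (simp add: vec_eq_iff forall_4)
  then show "v \<in> range f" by auto
qed

lemma not_in_hyperplane:
  assumes nonconst: "\<nexists>k. \<forall>w. a w = k"
  shows "\<not> (\<exists>n d. n \<noteq> 0 \<and> (\<forall>w. n \<bullet> f w = d))"
proof
  assume "\<exists>n d. n \<noteq> 0 \<and> (\<forall>w. n \<bullet> f w = d)"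
  then obtain n d where n0: "n \<noteq> 0" and nd: "\<forall>w. n \<bullet> f w = d" by blast
  define K where "K = of_real (n$2) * (1 + c) + of_real (n$3) * (\<i> * (1 - c))"
  have quad: "of_real (n$1 + n$4) * (a w)\<^sup>2 + K * a w + of_real (n$1 - n$4) * c = 0" for w
  proof -
    have "(\<Sum>k\<in>UNIV. of_real (n $ k) * Wv (a w) (c / a w) $ k) * a w = 0"
      using W.hyperplane_imp_linear_relation[OF nd] by simp
    then show ?thesis
      using a_nz unfolding Wv_eq sum_4 K_def by (simp add: algebra_simps power2_eq_square)
  qed
  obtain w1 w2 w3 where "a w1 \<noteq> a w2" "a w2 \<noteq> a w3" "a w1 \<noteq> a w3"
    using continuous_nonconstant_obtains_three_values[OF _ nonconst] a_entire
      holomorphic_on_imp_continuous_on by blast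
  moreover have "of_real (n$1 + n$4) * z\<^sup>2 + K * z + of_real (n$1 - n$4) * c = 0"
    if "z \<in> {a w1, a w2, a w3}" for z
    using that quad by blast
  ultimately have "of_real (n$1 + n$4) = (0::complex) \<and> K = 0 \<and> of_real (n$1 - n$4) * c = 0"
    by (rule quadratic_three_roots_eq_0)
  then have n14: "n$1 = 0" "n$4 = 0" and "K = 0"
    using c_ne by (auto simp del: of_real_add of_real_diff)
  then have "n$2 * (1 + Re c) + n$3 * Im c = 0" "n$2 * Im c + n$3 * (1 - Re c) = 0"
    unfolding K_def by (simp_all add: complex_eq_iff algebra_simps)
  then have "n$2 = 0" "n$3 = 0" using coord_kernel_trivial by blast+
  with n14 n0 show False by (simp add: vec_eq_iff forall_4)
qed

end

section \<open>Gauss curvature\<close>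

context first_type_graph
begin

text \<open>\<open>rot_Re s + \<i> rot_Im s = cnj c * exp (2 \<i> s)\<close>; for \<open>a = exp g\<close> the metric density depends
  only on \<open>s = Im g\<close>.\<close>
definition rot_Re :: "real \<Rightarrow> real" where
  "rot_Re s = Re c * cos (2 * s) + Im c * sin (2 * s)"

definition rot_Im :: "real \<Rightarrow> real" where
  "rot_Im s = Re c * sin (2 * s) - Im c * cos (2 * s)"

definition metric_density :: "real \<Rightarrow> real" where
  "metric_density s = 2 + 2 * (cmod c)\<^sup>2 - 4 * rot_Re s"

lemma Re_lorentz_Wv_exp:
  "Re (lorentz (Wv (exp z) (c / exp z)) (cnjv (Wv (exp z) (c / exp z)))) = metric_density (Im z)"
proof -
  have "exp z / exp (cnj z) = exp (\<i> * of_real (2 * Im z))"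
    by (metis exp_diff complex_diff_cnj mult.commute mult_2 of_real_add)
  moreover have "exp z * cnj (c / exp z) = cnj c * (exp z / exp (cnj z))"
    by (simp add: exp_cnj)
  ultimately have "exp z * cnj (c / exp z) = cnj c * exp (\<i> * of_real (2 * Im z))"
    by simp
  then have "Re (exp z * cnj (c / exp z)) = rot_Re (Im z)"
    unfolding rot_Re_def by (simp add: Re_exp Im_exp)
  then show ?thesis
    unfolding lorentz_Wv_cnjv metric_density_def by simp
qed

lemma metric_density_pos: "metric_density s > 0"
  using Re_lorentz_Wv_exp[of "\<i> * of_real s"]
    Re_lorentz_Wv_cnjv_pos[of "exp (\<i> * of_real s)" "c / exp (\<i> * of_real s)"] cmod_c_ne_1
  by simp

lemma rot_Re_Im_sq: "(rot_Re s)\<^sup>2 + (rot_Im s)\<^sup>2 = (cmod c)\<^sup>2"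
proof -
  have "(rot_Re s)\<^sup>2 + (rot_Im s)\<^sup>2 = ((Re c)\<^sup>2 + (Im c)\<^sup>2) * ((sin (2 * s))\<^sup>2 + (cos (2 * s))\<^sup>2)"
    unfolding rot_Re_def rot_Im_def by algebra
  then show ?thesis by (simp add: cmod_power2)
qed

lemma has_real_derivative_rot_Re: "(rot_Re has_real_derivative - 2 * rot_Im s) (at s)"
  unfolding rot_Re_def rot_Im_def by (auto intro!: derivative_eq_intros simp: algebra_simps)

lemma has_real_derivative_rot_Im: "(rot_Im has_real_derivative 2 * rot_Re s) (at s)"
  unfolding rot_Re_def rot_Im_def by (auto intro!: derivative_eq_intros simp: algebra_simps)

lemma has_real_derivative_metric_density: "(metric_density has_real_derivative 8 * rot_Im s) (at s)"
  unfolding metric_density_def[abs_def] using has_real_derivative_rot_Re[of s]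
  by (auto intro!: derivative_eq_intros)

definition log_conf :: "real \<Rightarrow> real" where
  "log_conf s = ln (2 * metric_density s) / 2"

definition log_conf_d1 :: "real \<Rightarrow> real" where
  "log_conf_d1 s = 4 * rot_Im s / metric_density s"

definition log_conf_d2 :: "real \<Rightarrow> real" where
  "log_conf_d2 s = 8 * ((2 + 2 * (cmod c)\<^sup>2) * rot_Re s - 4 * (cmod c)\<^sup>2) / (metric_density s)\<^sup>2"

lemma has_real_derivative_log_conf: "(log_conf has_real_derivative log_conf_d1 s) (at s)"
proof -
  have "((\<lambda>s. ln (2 * metric_density s) / 2) has_real_derivative
          (2 * (8 * rot_Im s) / (2 * metric_density s)) / 2) (at s)"
    using has_real_derivative_metric_density[of s] metric_density_pos[of s]
    by (auto intro!: derivative_eq_intros)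
  then show ?thesis unfolding log_conf_def[abs_def] log_conf_d1_def by simp
qed

lemma has_real_derivative_log_conf_d1: "(log_conf_d1 has_real_derivative log_conf_d2 s) (at s)"
proof -
  have "(log_conf_d1 has_real_derivative
          (4 * (2 * rot_Re s) * metric_density s - 4 * rot_Im s * (8 * rot_Im s))
            / (metric_density s * metric_density s)) (at s)"
    unfolding log_conf_d1_def[abs_def]
    using has_real_derivative_metric_density[of s] has_real_derivative_rot_Im[of s]
      metric_density_pos[of s]
    by (auto intro!: derivative_eq_intros simp: power2_eq_square)
  moreover have "4 * (2 * rot_Re s) * metric_density s - 4 * rot_Im s * (8 * rot_Im s)
      = 8 * ((2 + 2 * (cmod c)\<^sup>2) * rot_Re s - 4 * ((rot_Re s)\<^sup>2 + (rot_Im s)\<^sup>2))"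
    unfolding metric_density_def by (simp add: algebra_simps power2_eq_square)
  ultimately show ?thesis unfolding log_conf_d2_def rot_Re_Im_sq by (simp add: power2_eq_square)
qed

lemma gauss_curv_eq:
  assumes g: "g holomorphic_on UNIV" and a_exp: "\<And>z. a z = exp (g z)"
  shows "gauss_curv f w
           = - log_conf_d2 (Im (g w)) * (cmod (deriv g w))\<^sup>2 / (2 * metric_density (Im (g w)))"
proof -
  have conf: "conf_factor f z = sqrt (2 * metric_density (Im (g z)))" for z
    unfolding W.conf_factor_eq a_exp Re_lorentz_Wv_exp ..
  have "ln (sqrt (2 * metric_density s)) = log_conf s" for s
    using metric_density_pos[of s] by (simp add: log_conf_def ln_sqrt)
  then have "(\<lambda>z. ln (conf_factor f z)) = (\<lambda>z. log_conf (Im (g z)))"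
    by (simp add: conf)
  moreover have "(conf_factor f w)\<^sup>2 = 2 * metric_density (Im (g w))"
    unfolding conf using metric_density_pos[of "Im (g w)"] by simp
  ultimately show ?thesis
    unfolding gauss_curv_def
    using laplacian_comp_Im_holomorphic[OF g has_real_derivative_log_conf has_real_derivative_log_conf_d1]
    by simp
qed

lemma log_conf_d2_eq_0_iff:
  "log_conf_d2 s = 0 \<longleftrightarrow> rot_Re s = 2 * (cmod c)\<^sup>2 / (1 + (cmod c)\<^sup>2)"
proof -
  have "1 + (cmod c)\<^sup>2 > 0"
    using zero_le_power2[of "cmod c"] by linarith
  then show ?thesis
    using metric_density_pos[of s] unfolding log_conf_d2_def by (auto simp: field_simps)
qed

lemma log_conf_d2_zero_imp_rot_Im_nz:
  assumes "log_conf_d2 s = 0"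
  shows "rot_Im s \<noteq> 0"
proof
  assume "rot_Im s = 0"
  then have Re_sq: "(rot_Re s)\<^sup>2 = (cmod c)\<^sup>2" using rot_Re_Im_sq[of s] by simp
  have "1 + (cmod c)\<^sup>2 \<noteq> 0"
    using zero_le_power2[of "cmod c"] by linarith
  then have "(1 + (cmod c)\<^sup>2) * rot_Re s = 2 * (cmod c)\<^sup>2"
    using assms unfolding log_conf_d2_eq_0_iff by simp
  then have "((1 + (cmod c)\<^sup>2) * rot_Re s)\<^sup>2 = (2 * (cmod c)\<^sup>2)\<^sup>2"
    by simp
  then have "(1 + (cmod c)\<^sup>2)\<^sup>2 * (cmod c)\<^sup>2 = (2 * (cmod c)\<^sup>2)\<^sup>2"
    by (simp only: power_mult_distrib Re_sq)
  then have "(cmod c)\<^sup>2 * (1 - (cmod c)\<^sup>2)\<^sup>2 = 0"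
    by (simp add: algebra_simps power2_eq_square)
  then show False using c_ne cmod_c_ne_1 norm_ge_zero[of c] by (simp add: power2_eq_1_iff)
qed

text \<open>If \<open>log_conf_d2\<close> vanishes at \<open>Im (g w0)\<close>, then \<open>rot_Re \<circ> Im \<circ> g\<close> has nonzero derivative in
  the direction \<open>\<i> cnj (g' w0)\<close>, so it changes value near \<open>w0\<close>; but the zeros of \<open>log_conf_d2\<close>
  form a single level set of \<open>rot_Re\<close>.\<close>
lemma exists_near_log_conf_d2_nz:
  assumes g: "g holomorphic_on UNIV" and "deriv g w0 \<noteq> 0" "e > 0"
  shows "\<exists>w. dist w0 w < e \<and> log_conf_d2 (Im (g w)) \<noteq> 0"
proof (cases "log_conf_d2 (Im (g w0)) = 0")
  case True
  let ?p = "\<i> * cnj (deriv g w0)"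
  have Im_p: "Im (?p * deriv g w0) = (cmod (deriv g w0))\<^sup>2"
    by (simp add: cmod_power2) (simp add: power2_eq_square add.commute)
  have "has_dir_deriv (\<lambda>z. rot_Re (Im (g z))) ?p w0
               (- 2 * rot_Im (Im (g w0)) * Im (?p * deriv g w0))"
    using has_dir_deriv_chain[OF has_dir_deriv_Re_Im_holomorphic(2)[OF g, of ?p w0]
        has_real_derivative_rot_Re]
    by (simp only: mult.assoc)
  then have "has_dir_deriv (\<lambda>z. rot_Re (Im (g z))) ?p w0
               (- 2 * rot_Im (Im (g w0)) * (cmod (deriv g w0))\<^sup>2)"
    by (simp only: Im_p)
  moreover have "- 2 * rot_Im (Im (g w0)) * (cmod (deriv g w0))\<^sup>2 \<noteq> 0"
    using log_conf_d2_zero_imp_rot_Im_nz[OF True] assms(2) by simp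
  ultimately obtain w where w: "dist w0 w < e" "rot_Re (Im (g w)) \<noteq> rot_Re (Im (g w0))"
    using dir_deriv_nonzero_imp_nonconstant_near assms(3) by metis
  then have "log_conf_d2 (Im (g w)) \<noteq> 0"
    using True unfolding log_conf_d2_eq_0_iff by simp
  with w(1) show ?thesis by blast
next
  case False
  then show ?thesis using assms(3) by (intro exI[of _ w0]) simp
qed

lemma gauss_curv_nonzero:
  assumes nonconst: "\<nexists>k. \<forall>w. a w = k"
  shows "\<exists>w. gauss_curv f w \<noteq> 0"
proof -
  obtain g where g: "g holomorphic_on UNIV" and a_exp: "\<And>z. a z = exp (g z)"
    using contractible_imp_holomorphic_log[OF a_entire contractible_UNIV] a_nz by auto
  have g': "deriv g holomorphic_on UNIV" using g by (rule holomorphic_deriv) simp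
  have "\<exists>w0. deriv g w0 \<noteq> 0"
  proof (rule ccontr)
    assume "\<nexists>w0. deriv g w0 \<noteq> 0"
    then have "(g has_field_derivative 0) (at x within UNIV)" for x
      using holomorphic_on_UNIV_has_field_derivative[OF g, of x] by simp
    then obtain k where "\<forall>x\<in>UNIV. g x = k"
      using has_field_derivative_zero_constant[OF convex_UNIV] by blast
    then have "\<forall>w. a w = exp k" using a_exp by simp
    with nonconst show False by blast
  qed
  then obtain w0 where w0: "deriv g w0 \<noteq> 0" by blast
  have "continuous (at w0) (deriv g)"
    using g' holomorphic_on_imp_continuous_on continuous_on_eq_continuous_at open_UNIV by blast
  then obtain e where e: "e > 0" "\<And>w. dist w0 w < e \<Longrightarrow> deriv g w \<noteq> 0"
    using continuous_at_avoid[of w0 "deriv g" 0] w0 by blast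
  then obtain w where "dist w0 w < e" "log_conf_d2 (Im (g w)) \<noteq> 0"
    using exists_near_log_conf_d2_nz[OF g w0] by blast
  then have "gauss_curv f w \<noteq> 0"
    using e(2) metric_density_pos[of "Im (g w)"] unfolding gauss_curv_eq[OF g a_exp] by simp
  then show ?thesis ..
qed

end

theorem theorem4p5:
  fixes a :: "complex \<Rightarrow> complex" and c :: complex and X0 :: "real ^ 4"
    and f :: "complex \<Rightarrow> real ^ 4"
  assumes a_entire: "a holomorphic_on UNIV"
    and a_nz: "\<forall>w. a w \<noteq> 0"
    and c_ne: "c \<notin> {0, 1, -1}"
    and c_abs: "(Re c)^2 + (Im c)^2 \<noteq> 1"
    and f_def: "\<forall>w. f w = X0 + 2 *\<^sub>R (\<chi> k. Re (contour_integral (linepath 0 w)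
                 (\<lambda>\<xi>. (vector [a \<xi> + c / a \<xi>, 1 + c, \<i> * (1 - c), a \<xi> - c / a \<xi>] :: complex ^ 4) $ k)))"
  shows "conformal f \<and> minimal f \<and> spacelike_immersion f
    \<and> (\<forall>w. fw f w = Wv (a w) (c / a w))
    \<and> (\<forall>w. f w $ 2 - X0 $ 2 = 2 * ((1 + Re c) * Re w - Im c * Im w)
         \<and> f w $ 3 - X0 $ 3 = 2 * (Im c * Re w + (Re c - 1) * Im w))
    \<and> bij (\<lambda>w. (f w $ 2 - X0 $ 2, f w $ 3 - X0 $ 3))
    \<and> (\<exists>A B :: real \<Rightarrow> real \<Rightarrow> real.
          smooth_fun (\<lambda>z. A (Re z) (Im z)) \<and> smooth_fun (\<lambda>z. B (Re z) (Im z))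
        \<and> range f = {(vector [A x y, x + X0 $ 2, y + X0 $ 3, B x y] :: real ^ 4) | x y. True})
    \<and> ((\<nexists>k. \<forall>w. a w = k) \<longrightarrow>
          (\<exists>w. gauss_curv f w \<noteq> 0)
        \<and> \<not> (\<exists>n d. n \<noteq> 0 \<and> (\<forall>w. n \<bullet> f w = d)))"
proof -
  interpret first_type_graph a c X0 f
    using assms by unfold_locales
  have graph: "\<exists>A B :: real \<Rightarrow> real \<Rightarrow> real.
          smooth_fun (\<lambda>z. A (Re z) (Im z)) \<and> smooth_fun (\<lambda>z. B (Re z) (Im z))
        \<and> range f = {(vector [A x y, x + X0 $ 2, y + X0 $ 3, B x y] :: real ^ 4) | x y. True}"
    by (intro exI[of _ "\<lambda>x y. f (uv_of_xy x y) $ 1"] exI[of _ "\<lambda>x y. f (uv_of_xy x y) $ 4"]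
        conjI smooth_fun_f_uv_of_xy range_f_graph)
  show ?thesis
  proof (intro conjI allI impI)
    show "conformal f" "minimal f" "spacelike_immersion f"
      using W_null W_positive by (rule W.conformal_f W.minimal_f W.spacelike_immersion_f)+
  qed (use W.fw_eq f_coord_2 f_coord_3 bij_coords graph gauss_curv_nonzero not_in_hyperplane
       in simp_all)
qed

end
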